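(* Let $\Phi=\forall u_1\ldots\forall u_n\exists e_1(D_1)\ldots\exists e_m(D_m).\varphi$ be a DQBF with prefix $\mathcal{Q}$, let $A$ be a set of arbiter variables, let $\psi$ be a CNF with $\mathit{var}(\psi)\subseteq U\cup E\cup A$, and let $C=\neg p\vee\ell$ be a forcing clause in $\psi$. Then $\mathcal{Q}\exists A(\emptyset).\psi\wedge C$ is true if and only if $\mathcal{Q}\exists A(\emptyset).\psi$ is true.
   Context: For a set $V$ of variables, $[V]$ is the set of assignments $V\to\{\textsc{true},\textsc{false}\}$; assignments are identified with terms of the literals they make true, $\neg\sigma$ is the clause of the negations of these literals, and $\sigma|_W$ denotes restriction to (the part of the domain lying in) $W$. A DQBF is $\forall u_1\ldots\forall u_n\exists e_1(D_1)\ldots\exists e_m(D_m).\varphi$ with pairwise distinct variables, $U=\{u_i\}$, $E=\{e_j\}$, dependency sets $D(e_j)=D_j\subseteq U$, and $\varphi$ a CNF over $U\cup E$; a model is a family $F=(F_e)_{e}$ with $F_e:[D(e)]\to\{\textsc{true},\textsc{false}\}$ such that for every $\sigma\in[U]$, $\sigma\cup F(\sigma)$ satisfies the matrix, where $F(\sigma)$ assigns each existential $e$ the value $F_e(\sigma|_{D(e)})$; the DQBF is true iff it has a model. Arbiter variables are fresh variables $e^\sigma$ for $e\in E$, $\sigma\in[D(e)]$. For a set $A$ of them and a CNF $\psi$, $\mathcal{Q}\exists A(\emptyset).\psi$ is the DQBF whose prefix is that of $\Phi$ extended by every variable of $A$ as an existential variable with empty dependency set, and whose matrix is $\psi$. Forcing: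 let $\ell$ be a literal on a variable in $E$, $\psi$ a formula with $\mathit{var}(\psi)\subseteq U\cup E\cup A$, and $\sigma$ a partial assignment to $U\cup A$; $\ell$ is forced by $\sigma$ in $\psi$ if $\psi\wedge\sigma\wedge\neg\ell$ is unsatisfiable, and in that case $\neg(\sigma|_{D(\mathit{var}(\ell))\cup A})\vee\ell$ is called a forcing clause in $\psi$. *)

theory Defs
  imports Main
begin

(* Variables: original DQBF variables 'v, and arbiter variables e^sigma,
   represented as Arb e sigma with sigma an assignment (partial map with
   domain D(e)). The datatype makes arbiter variables fresh. *)
datatype 'v var = V 'v | Arb 'v "'v \<rightharpoonup> bool"

(* A literal is a variable with a polarity; (x, True) is x, (x, False) is \<not>x. *)
type_synonym 'a lit = "'a \<times> bool"
type_synonym 'a clause = "'a lit set"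
type_synonym 'a cnf = "'a clause set"

definition vars :: "'a cnf \<Rightarrow> 'a set" where
  "vars M = {x. \<exists>C\<in>M. \<exists>b. (x, b) \<in> C}"

definition sat_cnf :: "('a \<rightharpoonup> bool) \<Rightarrow> 'a cnf \<Rightarrow> bool" where
  "sat_cnf \<tau> M \<longleftrightarrow> (\<forall>C\<in>M. \<exists>(x, b)\<in>C. \<tau> x = Some b)"

definition dqbf_true :: "'a set \<Rightarrow> 'a set \<Rightarrow> ('a \<Rightarrow> 'a set) \<Rightarrow> 'a cnf \<Rightarrow> bool" where
  "dqbf_true U E D M \<longleftrightarrow>
     (\<exists>F :: 'a \<Rightarrow> ('a \<rightharpoonup> bool) \<Rightarrow> bool.
        \<forall>\<sigma>. dom \<sigma> = U \<longrightarrow>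
          sat_cnf (\<sigma> ++ (\<lambda>x. if x \<in> E then Some (F x (\<sigma> |` D x)) else None)) M)"

definition dqbf_wf :: "'a set \<Rightarrow> 'a set \<Rightarrow> ('a \<Rightarrow> 'a set) \<Rightarrow> 'a cnf \<Rightarrow> bool" where
  "dqbf_wf U E D \<phi> \<longleftrightarrow> finite U \<and> finite E \<and> U \<inter> E = {} \<and>
     (\<forall>e\<in>E. D e \<subseteq> U) \<and> finite \<phi> \<and> (\<forall>C\<in>\<phi>. finite C) \<and> vars \<phi> \<subseteq> U \<union> E"

definition arbiters :: "'v set \<Rightarrow> ('v \<Rightarrow> 'v set) \<Rightarrow> 'v var set" where
  "arbiters E D = {Arb e \<sigma> | e \<sigma>. e \<in> E \<and> dom \<sigma> = D e}"

fun ext_dep :: "('v \<Rightarrow> 'v set) \<Rightarrow> 'v var \<Rightarrow> 'v var set" where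
  "ext_dep D (V x) = V ` D x"
| "ext_dep D (Arb e \<sigma>) = {}"

definition ext_true :: "'v set \<Rightarrow> 'v set \<Rightarrow> ('v \<Rightarrow> 'v set) \<Rightarrow> 'v var set \<Rightarrow> 'v var cnf \<Rightarrow> bool" where
  "ext_true U E D A \<psi> = dqbf_true (V ` U) (V ` E \<union> A) (ext_dep D) \<psi>"

definition forced :: "'a cnf \<Rightarrow> ('a \<rightharpoonup> bool) \<Rightarrow> 'a lit \<Rightarrow> bool" where
  "forced \<psi> \<sigma> l \<longleftrightarrow>
     \<not> (\<exists>\<tau> :: 'a \<Rightarrow> bool. sat_cnf (Some \<circ> \<tau>) \<psi> \<and>
            (\<forall>x\<in>dom \<sigma>. \<sigma> x = Some (\<tau> x)) \<and> \<tau> (fst l) \<noteq> snd l)"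

definition neg_term :: "('a \<rightharpoonup> bool) \<Rightarrow> 'a clause" where
  "neg_term \<sigma> = {(x, \<not> b) | x b. \<sigma> x = Some b}"

definition forcing_clause ::
  "'v set \<Rightarrow> 'v set \<Rightarrow> ('v \<Rightarrow> 'v set) \<Rightarrow> 'v var set \<Rightarrow> 'v var cnf \<Rightarrow> 'v var clause \<Rightarrow> bool" where
  "forcing_clause U E D A \<psi> C \<longleftrightarrow>
     (\<exists>e b \<sigma>. e \<in> E \<and> dom \<sigma> \<subseteq> V ` U \<union> A \<and> forced \<psi> \<sigma> (V e, b) \<and>
        C = insert (V e, b) (neg_term (\<sigma> |` (V ` D e \<union> A))))"

end

theory Submission
  imports Defs
begin

(* Every model F of \<psi> already satisfies C = \<not>p \<or> l. Fix a universal assignment \<sigma>1.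
   If \<sigma>1 \<union> F(\<sigma>1) contradicts p, it satisfies \<not>p. Otherwise let \<sigma>0 be \<sigma>1 overwritten
   by the universal part of \<sigma>. Since arbiter variables have empty dependency sets, \<sigma>0 \<union> F(\<sigma>0)
   extends \<sigma> and hence makes the forced literal l true; and since \<sigma>0 and \<sigma>1 agree on D(e),
   F assigns e the same value under both. *)

definition skolem_extension ::
  "'a set \<Rightarrow> ('a \<Rightarrow> 'a set) \<Rightarrow> ('a \<Rightarrow> ('a \<rightharpoonup> bool) \<Rightarrow> bool) \<Rightarrow> ('a \<rightharpoonup> bool) \<Rightarrow> ('a \<rightharpoonup> bool)" where
  "skolem_extension E D F \<sigma> = \<sigma> ++ (\<lambda>x. if x \<in> E then Some (F x (\<sigma> |` D x)) else None)"

lemma dqbf_true_iff_skolem_extension: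
  "dqbf_true U E D M \<longleftrightarrow> (\<exists>F. \<forall>\<sigma>. dom \<sigma> = U \<longrightarrow> sat_cnf (skolem_extension E D F \<sigma>) M)"
  by (simp add: dqbf_true_def skolem_extension_def)

lemma skolem_extension_outside:
  "x \<notin> E \<Longrightarrow> skolem_extension E D F \<sigma> x = \<sigma> x"
  by (simp add: skolem_extension_def map_add_def)

lemma skolem_extension_inside:
  "x \<in> E \<Longrightarrow> skolem_extension E D F \<sigma> x = Some (F x (\<sigma> |` D x))"
  by (simp add: skolem_extension_def)

lemma dom_skolem_extension:
  "dom (skolem_extension E D F \<sigma>) = dom \<sigma> \<union> E"
  by (auto simp: skolem_extension_def split: if_splits)

lemma sat_cnf_insert:
  "sat_cnf \<tau> (insert C M) \<longleftrightarrow> (\<exists>(x, b)\<in>C. \<tau> x = Some b) \<and> sat_cnf \<tau> M"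
  unfolding sat_cnf_def by blast

lemma sat_cnf_map_le:
  assumes "sat_cnf \<tau> M" and "\<tau> \<subseteq>\<^sub>m \<tau>'"
  shows "sat_cnf \<tau>' M"
  unfolding sat_cnf_def
proof
  fix C assume "C \<in> M"
  then obtain x b where "(x, b) \<in> C" "\<tau> x = Some b"
    using assms(1) unfolding sat_cnf_def by blast
  moreover have "\<tau>' x = Some b"
    using assms(2) \<open>\<tau> x = Some b\<close> by (metis domI map_le_def)
  ultimately show "\<exists>(x, b)\<in>C. \<tau>' x = Some b" by blast
qed

lemma sat_neg_term:
  assumes "\<not> \<rho> \<subseteq>\<^sub>m \<tau>" and "dom \<rho> \<subseteq> dom \<tau>"
  shows "\<exists>(x, b)\<in>neg_term \<rho>. \<tau> x = Some b"
proof -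
  obtain x c where \<rho>x: "\<rho> x = Some c" and "\<tau> x \<noteq> Some c"
    using assms(1) unfolding map_le_def by auto
  moreover have "x \<in> dom \<tau>" using \<rho>x assms(2) by blast
  ultimately have "\<tau> x = Some (\<not> c)" by auto
  moreover have "(x, \<not> c) \<in> neg_term \<rho>" using \<rho>x by (simp add: neg_term_def)
  ultimately show ?thesis by blast
qed

lemma forced_literal_true:
  assumes "forced M \<sigma> l" and "sat_cnf \<tau> M" and "\<sigma> \<subseteq>\<^sub>m \<tau>" and "fst l \<in> dom \<tau>"
  shows "\<tau> (fst l) = Some (snd l)"
proof -
  define \<tau>' where "\<tau>' x = (case \<tau> x of Some v \<Rightarrow> v | None \<Rightarrow> True)" for x
  have \<tau>_le: "\<tau> \<subseteq>\<^sub>m Some \<circ> \<tau>'" by (auto simp: map_le_def \<tau>'_def)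
  then have "sat_cnf (Some \<circ> \<tau>') M" using assms(2) by (rule sat_cnf_map_le[rotated])
  moreover have "\<forall>x\<in>dom \<sigma>. \<sigma> x = Some (\<tau>' x)"
    using map_le_trans[OF assms(3) \<tau>_le] by (simp add: map_le_def)
  ultimately have "\<tau>' (fst l) = snd l" using assms(1) unfolding forced_def by blast
  then show ?thesis using assms(4) by (auto simp: \<tau>'_def)
qed

(* K plays the role of the set A of arbiter variables. *)
lemma skolem_extension_forced:
  assumes model: "\<And>\<sigma>'. dom \<sigma>' = U \<Longrightarrow> sat_cnf (skolem_extension E D F \<sigma>') M"
    and UE: "U \<inter> E = {}" and KE: "K \<subseteq> E" and K_const: "\<forall>x\<in>K. D x = {}"
    and e: "e \<in> E" and dom\<sigma>: "dom \<sigma> \<subseteq> U \<union> K" and forced: "forced M \<sigma> (e, b)"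
    and dom\<sigma>1: "dom \<sigma>1 = U" and agree: "\<sigma> |` (D e \<union> K) \<subseteq>\<^sub>m skolem_extension E D F \<sigma>1"
  shows "skolem_extension E D F \<sigma>1 e = Some b"
proof -
  define \<sigma>0 where "\<sigma>0 = \<sigma>1 ++ (\<sigma> |` U)"
  have dom\<sigma>0: "dom \<sigma>0 = U" using dom\<sigma>1 by (auto simp: \<sigma>0_def)
  have \<sigma>1_agrees_on_D: "\<sigma>1 x = Some c" if "x \<in> D e" "x \<in> U" "\<sigma> x = Some c" for x c
  proof -
    have "(\<sigma> |` (D e \<union> K)) x = Some c" using that by simp
    then have "skolem_extension E D F \<sigma>1 x = Some c" using agree by (metis domI map_le_def)
    moreover have "x \<notin> E" using that UE by blast
    ultimately show ?thesis by (simp add: skolem_extension_outside)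
  qed
  have "\<sigma> \<subseteq>\<^sub>m skolem_extension E D F \<sigma>0"
    unfolding map_le_def
  proof
    fix x assume x: "x \<in> dom \<sigma>"
    show "\<sigma> x = skolem_extension E D F \<sigma>0 x"
    proof (cases "x \<in> U")
      case True
      then have "x \<notin> E" using UE by blast
      then show ?thesis
        using True x by (auto simp: skolem_extension_outside \<sigma>0_def map_add_def)
    next
      case False
      then have "x \<in> K" using x dom\<sigma> by blast
      then have "skolem_extension E D F \<sigma>0 x = skolem_extension E D F \<sigma>1 x"
        using KE K_const by (auto simp: skolem_extension_inside)
      also have "\<dots> = \<sigma> x" using agree x \<open>x \<in> K\<close> by (auto simp: map_le_def)
      finally show ?thesis by simp
    qed
  qed
  then have "skolem_extension E D F \<sigma>0 e = Some b"
    using forced_literal_true[OF forced model[OF dom\<sigma>0]] e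
    by (simp add: dom_skolem_extension)
  moreover have "\<sigma>0 |` D e = \<sigma>1 |` D e"
  proof
    fix x
    show "(\<sigma>0 |` D e) x = (\<sigma>1 |` D e) x"
      using \<sigma>1_agrees_on_D[of x] by (auto simp: \<sigma>0_def map_add_def restrict_map_def split: option.split)
  qed
  ultimately show ?thesis using e by (simp add: skolem_extension_inside)
qed

theorem dqbf_true_insert_forcing_clause:
  assumes UE: "U \<inter> E = {}" and KE: "K \<subseteq> E" and K_const: "\<forall>x\<in>K. D x = {}"
    and e: "e \<in> E" and dom\<sigma>: "dom \<sigma> \<subseteq> U \<union> K" and forced: "forced M \<sigma> (e, b)"
  shows "dqbf_true U E D (insert (insert (e, b) (neg_term (\<sigma> |` (D e \<union> K)))) M)
    \<longleftrightarrow> dqbf_true U E D M"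
    (is "dqbf_true U E D (insert (insert (e, b) (neg_term ?p)) M) \<longleftrightarrow> _")
proof
  assume "dqbf_true U E D M"
  then obtain F where model: "\<And>\<sigma>'. dom \<sigma>' = U \<Longrightarrow> sat_cnf (skolem_extension E D F \<sigma>') M"
    by (auto simp: dqbf_true_iff_skolem_extension)
  have "sat_cnf (skolem_extension E D F \<sigma>1) (insert (insert (e, b) (neg_term ?p)) M)"
    if dom\<sigma>1: "dom \<sigma>1 = U" for \<sigma>1
  proof (cases "?p \<subseteq>\<^sub>m skolem_extension E D F \<sigma>1")
    case True
    then show ?thesis
      using skolem_extension_forced[OF model UE KE K_const e dom\<sigma> forced dom\<sigma>1] model[OF dom\<sigma>1]
      by (simp add: sat_cnf_insert)
  next
    case False
    moreover have "dom ?p \<subseteq> dom (skolem_extension E D F \<sigma>1)"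
      using dom\<sigma> dom\<sigma>1 KE by (auto simp: dom_skolem_extension)
    ultimately have "\<exists>(x, c)\<in>neg_term ?p. skolem_extension E D F \<sigma>1 x = Some c"
      by (rule sat_neg_term)
    then show ?thesis
      using model[OF dom\<sigma>1] unfolding sat_cnf_insert by blast
  qed
  then show "dqbf_true U E D (insert (insert (e, b) (neg_term ?p)) M)"
    by (auto simp: dqbf_true_iff_skolem_extension)
qed (auto simp: dqbf_true_iff_skolem_extension sat_cnf_insert)

theorem corollary2:
  fixes U E :: "'v set" and D :: "'v \<Rightarrow> 'v set" and \<phi> :: "'v cnf"
    and A :: "'v var set" and \<psi> :: "'v var cnf" and C :: "'v var clause"
  assumes "dqbf_wf U E D \<phi>"
    and "A \<subseteq> arbiters E D"
    and "finite \<psi>" and "\<forall>c\<in>\<psi>. finite c"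
    and "vars \<psi> \<subseteq> V ` U \<union> V ` E \<union> A"
    and "forcing_clause U E D A \<psi> C"
  shows "ext_true U E D A (insert C \<psi>) \<longleftrightarrow> ext_true U E D A \<psi>"
proof -
  obtain e b \<sigma> where e: "e \<in> E" and dom\<sigma>: "dom \<sigma> \<subseteq> V ` U \<union> A"
    and forced: "forced \<psi> \<sigma> (V e, b)"
    and C: "C = insert (V e, b) (neg_term (\<sigma> |` (V ` D e \<union> A)))"
    using assms(6) unfolding forcing_clause_def by blast
  have "V ` U \<inter> (V ` E \<union> A) = {}"
    using assms(1,2) unfolding dqbf_wf_def arbiters_def by auto
  moreover have "\<forall>x\<in>A. ext_dep D x = {}"
    using assms(2) unfolding arbiters_def by auto
  ultimately show ?thesis
    using dqbf_true_insert_forcing_clause[of "V ` U" "V ` E \<union> A" A "ext_dep D" "V e" \<sigma> \<psi> b]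
      e dom\<sigma> forced
    by (simp add: C ext_true_def)
qed

end
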